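(* Let $G$ be an undirected graph and let $W$ be any walk in $G$. Then there exists a walk in $G$ that traverses exactly the same set of edges as $W$ and traverses each of these edges at most twice.
   Context: A walk is a sequence of vertices $v_0,\dots,v_t$ with consecutive vertices adjacent; it traverses the edges $\{v_{j-1},v_j\}$. *)

theory Defs
  imports Main
begin

definition undirected_graph :: "('a \<Rightarrow> 'a \<Rightarrow> bool) \<Rightarrow> bool" where
  "undirected_graph E \<longleftrightarrow> (\<forall>u v. E u v \<longrightarrow> E v u) \<and> (\<forall>v. \<not> E v v)"

definition is_walk :: "('a \<Rightarrow> 'a \<Rightarrow> bool) \<Rightarrow> 'a list \<Rightarrow> bool" where
  "is_walk E W \<longleftrightarrow> W \<noteq> [] \<and> (\<forall>j. Suc j < length W \<longrightarrow> E (W ! j) (W ! Suc j))"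

definition walk_edges :: "'a list \<Rightarrow> 'a set set" where
  "walk_edges W = {{W ! j, W ! Suc j} | j. Suc j < length W}"

definition traversals :: "'a list \<Rightarrow> 'a set \<Rightarrow> nat" where
  "traversals W e = card {j. Suc j < length W \<and> {W ! j, W ! Suc j} = e}"

end

theory Submission
  imports Defs
begin

text \<open>Induction on the walk, maintaining a closed walk C that starts and ends at the
current endpoint u, has exactly the edges seen so far and uses each at most twice. When
the walk steps along an edge {u, v} that C does not use yet, go from v around C back to
v: the new edge is used exactly twice. Otherwise v lies on C, and rotating C to start and
end at v changes neither its multiset of edges nor the walk property.\<close>

fun edge_list :: "'a list \<Rightarrow> 'a set list" where
  "edge_list (u # v # vs) = {u, v} # edge_list (v # vs)"
| "edge_list _ = []"

lemma length_edge_list [simp]: "length (edge_list vs) = length vs - 1"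
  by (induction vs rule: edge_list.induct) auto

lemma nth_edge_list [simp]: "Suc j < length vs \<Longrightarrow> edge_list vs ! j = {vs ! j, vs ! Suc j}"
  by (induction vs arbitrary: j rule: edge_list.induct) (auto simp: nth_Cons split: nat.split)

lemma successively_iff_nth:
  "successively P xs \<longleftrightarrow> (\<forall>j. Suc j < length xs \<longrightarrow> P (xs ! j) (xs ! Suc j))"
  by (induction P xs rule: successively.induct) (auto simp: nth_Cons split: nat.split)

lemma walk_edges_eq_set_edge_list: "walk_edges W = set (edge_list W)"
  unfolding walk_edges_def set_conv_nth by (auto simp: less_diff_conv) (metis nth_edge_list)

lemma traversals_eq_count_list: "traversals W e = count_list (edge_list W) e"
proof -
  have "{j. Suc j < length W \<and> {W ! j, W ! Suc j} = e} =
        {j. j < length (edge_list W) \<and> e = edge_list W ! j}"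
    by auto
  then show ?thesis
    by (simp add: traversals_def count_list_eq_length_filter length_filter_conv_card)
qed

lemma is_walk_iff_successively: "is_walk E W \<longleftrightarrow> W \<noteq> [] \<and> successively E W"
  unfolding is_walk_def successively_iff_nth ..

lemma edge_list_split:
  "edge_list (xs @ v # ys) = edge_list (xs @ [v]) @ edge_list (v # ys)"
  by (induction xs rule: edge_list.induct) auto

lemma edge_list_snoc:
  "vs \<noteq> [] \<Longrightarrow> edge_list (vs @ [w]) = edge_list vs @ [{last vs, w}]"
  by (induction vs rule: edge_list.induct) auto

lemma edge_subset_set_if_in_edge_list: "e \<in> set (edge_list vs) \<Longrightarrow> e \<subseteq> set vs"
  by (induction vs rule: edge_list.induct) auto

lemma closed_walk_rotate:
  assumes "last (v # q) = u" and "successively E (u # p @ v # q)"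
  shows "successively E (v # q @ p @ [v])"
    and "set (edge_list (v # q @ p @ [v])) = set (edge_list (u # p @ v # q))"
    and "count_list (edge_list (v # q @ p @ [v])) e = count_list (edge_list (u # p @ v # q)) e"
proof -
  obtain q' where q': "v # q = q' @ [u]"
    using assms(1) by (metis append_butlast_last_id list.distinct(1))
  have rot: "v # q @ p @ [v] = q' @ u # p @ [v]"
    using q' by (metis append.assoc append_Cons append_Nil)
  have "successively E ((u # p @ [v]) @ q)"
    using assms(2) by simp
  then have tail: "successively E (u # p @ [v])" and "successively E (v # q)"
    using successively_append_iff[of E "u # p @ [v]" q] successively_Cons[of E v q] by auto
  then have "successively E q'" and "q' = [] \<or> E (last q') u"
    unfolding q' successively_append_iff by auto
  with tail show "successively E (v # q @ p @ [v])"
    unfolding rot successively_append_iff by simp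
  have "edge_list (v # q @ p @ [v]) = edge_list (v # q) @ edge_list (u # p @ [v])"
    unfolding rot q' by (rule edge_list_split)
  moreover have "edge_list (u # p @ v # q) = edge_list (u # p @ [v]) @ edge_list (v # q)"
    using edge_list_split[of "u # p" v q] by simp
  ultimately show "set (edge_list (v # q @ p @ [v])) = set (edge_list (u # p @ v # q))"
    and "count_list (edge_list (v # q @ p @ [v])) e = count_list (edge_list (u # p @ v # q)) e"
    by auto
qed

lemma closed_walk_with_same_edges:
  assumes "symp E" and "W \<noteq> []" and "successively E W"
  shows "\<exists>C. C \<noteq> [] \<and> successively E C \<and> hd C = last W \<and> last C = last W \<and>
           set (edge_list C) = set (edge_list W) \<and> (\<forall>e. count_list (edge_list C) e \<le> 2)"
  using assms(2,3)
proof (induction W rule: rev_induct)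
  case (snoc v W)
  show ?case
  proof (cases "W = []")
    case True
    then show ?thesis by (intro exI[of _ "[v]"]) simp
  next
    case False
    define u where "u = last W"
    have edges: "edge_list (W @ [v]) = edge_list W @ [{u, v}]"
      using False by (simp add: edge_list_snoc u_def)
    have "successively E W" and "E u v"
      using False snoc.prems(2) by (auto simp: u_def successively_append_iff)
    with False obtain C where C: "C \<noteq> []" "successively E C" "hd C = u" "last C = u"
      "set (edge_list C) = set (edge_list W)" "\<forall>e. count_list (edge_list C) e \<le> 2"
      using snoc.IH u_def by blast
    show ?thesis
    proof (cases "{u, v} \<in> set (edge_list C)")
      case False
      have "edge_list (v # C @ [v]) = {v, u} # edge_list (C @ [v])"
        using C(1,3) by (cases C) auto
      also have "\<dots> = {v, u} # edge_list C @ [{u, v}]"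
        using C(1,4) by (simp add: edge_list_snoc)
      finally have "edge_list (v # C @ [v]) = {v, u} # edge_list C @ [{u, v}]" .
      moreover have "{v, u} = {u, v}" by blast
      moreover have "successively E (v # C @ [v])"
        using C(1-4) \<open>E u v\<close> sympD[OF assms(1) \<open>E u v\<close>]
        by (auto simp: successively_append_iff successively_Cons)
      ultimately show ?thesis
        using C False edges by (intro exI[of _ "v # C @ [v]"]) auto
    next
      case True
      then have "v \<in> set C" using edge_subset_set_if_in_edge_list by blast
      then obtain p q where split: "C = p @ v # q" by (meson split_list)
      show ?thesis
      proof (cases p)
        case Nil
        then show ?thesis using C True edges split by (intro exI[of _ C]) auto
      next
        case (Cons u' p')
        then have "C = u # p' @ v # q" and "last (v # q) = u"
          using C(3,4) split by auto
        then show ?thesis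
          using C True edges closed_walk_rotate[of v q u E p']
          by (intro exI[of _ "v # q @ p' @ [v]"]) auto
      qed
    qed
  qed
qed simp

theorem lemma3:
  fixes E :: "'a \<Rightarrow> 'a \<Rightarrow> bool" and W :: "'a list"
  assumes "undirected_graph E" and "is_walk E W"
  shows "\<exists>W'. is_walk E W' \<and> walk_edges W' = walk_edges W \<and>
           (\<forall>e \<in> walk_edges W'. traversals W' e \<le> 2)"
proof -
  have "symp E"
    using assms(1) unfolding undirected_graph_def by (blast intro: sympI)
  moreover have "W \<noteq> []" and "successively E W"
    using assms(2) by (simp_all add: is_walk_iff_successively)
  ultimately obtain C where "C \<noteq> []" "successively E C" "set (edge_list C) = set (edge_list W)"
    "\<forall>e. count_list (edge_list C) e \<le> 2"
    using closed_walk_with_same_edges by blast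
  then show ?thesis
    by (intro exI[of _ C])
      (simp add: is_walk_iff_successively walk_edges_eq_set_edge_list traversals_eq_count_list)
qed

end
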